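(* Suppose $\widehat{\mathcal L}^{Y\text{-}A\text{-}B}$-uniform-monotonicity holds for the SCC $F$. Let $(i,\theta)\in\mathcal I\times\Theta$. If $F(\theta)\subseteq\arg\min_{z\in Z^*}u_i^\theta(z)$ and $Z^*\cap\mathcal L_i^Z(F(\theta),\theta)$ is an $i$-$Z^*$-max set, then $\Xi_i(\theta)\ne\emptyset$.
   Context: Standing setup: $\mathcal I=\{1,\dots,I\}$ finite, $I\ge 3$; $\Theta$ finite or countably infinite; $Z$ finite; $Y=\Delta(Z)$; $F:\Theta\to 2^Z\setminus\{\emptyset\}$; $u_i^\theta:Z\to\mathbb R$, $U_i^\theta(y)=\sum_zy_zu_i^\theta(z)$; $\mathcal L_i^Y(\alpha,\theta)=\{y\in Y:U_i^\theta(\alpha)\ge U_i^\theta(y)\}$, $\mathcal L_i^Z(\alpha,\theta)=\{z\in Z:U_i^\theta(\alpha)\ge u_i^\theta(z)\}$, $\mathcal L_i^Z(E,\theta)=\bigcap_{z\in E}\mathcal L_i^Z(z,\theta)$; UNIF$(E)$ is the uniform lottery on $E$. A nonempty $E\subseteq Z$ is an $i$-max set if for some $\theta$, $E\subseteq\arg\max_{z\in E}u_i^\theta(z)$ and $E\subseteq\arg\max_{z\in Z}u_j^\theta(z)$ for all $j\ne i$. $Z^*=\bigcup_\theta F(\theta)$ if $Z$ is an $i$-max set for some $i$, else $Z^*=Z$. A nonempty $E\subseteq Z^*$ is an $i$-$Z^*$-$\theta$-max set if $E\subseteq\arg\max_{z\in E}u_i^\theta(z)$ and $E\subseteq\arg\max_{z\in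 Z^*}u_j^\theta(z)$ for all $j\ne i$; $\Lambda^i(E)=\{\theta:E\text{ is an }i\text{-}Z^*\text{-}\theta\text{-max set}\}$ ($=\emptyset$ for $E=\emptyset$); $E$ is an $i$-$Z^*$-max set if $\Lambda^i(E)\ne\emptyset$. $\Theta_i^\theta=\{\theta':F(\theta)\text{ is an }i\text{-}Z^*\text{-}\theta'\text{-max set and }F(\theta)\subseteq F(\theta')\}$; $\Xi_i(\theta)=\{K\subseteq\Theta_i^\theta,K\ne\emptyset:\Theta_i^\theta\cap\Lambda^i(Z^*\cap\mathcal L_i^Z(F(\theta),\theta)\cap\bigcap_{\theta'\in K}F(\theta'))=K\}$. $\widehat{\mathcal L}_i^{Y\text{-}A\text{-}B}(\mathrm{UNIF}[F(\theta)],\theta)=\Delta[Z^*\cap\mathcal L_i^Z(F(\theta),\theta)\cap\bigcup_{K\in\Xi_i(\theta)}\bigcap_{\theta'\in K}F(\theta')]$ if $F(\theta)\subseteq\arg\min_{z\in Z^*}u_i^\theta(z)$, $\Xi_i(\theta)\ne\emptyset$ and $Z^*\cap\mathcal L_i^Z(F(\theta),\theta)$ is an $i$-$Z^*$-max set; otherwise $\Delta(Z^* )\cap\mathcal L_i^Y(\mathrm{UNIF}[F(\theta)],\theta)$. $\widehat{\mathcal L}^{Y\text{-}A\text{-}B}$-uniform-monotonicity: for all $\theta,\theta'$, [$\widehat{\mathcal L}_i^{Y\text{-}A\text{-}B}(\mathrm{UNIF}[F(\theta)],\theta)\subseteq\mathcal L_i^Y(\mathrm{UNIF}[F(\theta)],\theta')$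 for all $i$] implies $F(\theta)\subseteq F(\theta')$. *)

theory Defs
  imports Complex_Main "HOL-Library.Countable"
begin

text \<open>Agents: type 'i (finite); states: type 'th (countable); outcomes: type 'z (finite).
  u i th z is the utility of agent i at state th for outcome z; F is the SCC.
  Lotteries are functions 'z => real.\<close>

definition lotteries_on :: "'z::finite set \<Rightarrow> ('z \<Rightarrow> real) set" where
  "lotteries_on S = {y. (\<forall>z. 0 \<le> y z) \<and> (\<Sum>z\<in>UNIV. y z) = 1 \<and> (\<forall>z. z \<notin> S \<longrightarrow> y z = 0)}"

abbreviation lotteries :: "('z::finite \<Rightarrow> real) set" where
  "lotteries \<equiv> lotteries_on UNIV"

definition unif :: "'z::finite set \<Rightarrow> 'z \<Rightarrow> real" where
  "unif E = (\<lambda>z. if z \<in> E then 1 / real (card E) else 0)"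

definition EU :: "('i \<Rightarrow> 'th \<Rightarrow> 'z \<Rightarrow> real) \<Rightarrow> 'i \<Rightarrow> 'th \<Rightarrow> ('z::finite \<Rightarrow> real) \<Rightarrow> real" where
  "EU u i th y = (\<Sum>z\<in>UNIV. y z * u i th z)"

definition LY :: "('i \<Rightarrow> 'th \<Rightarrow> 'z \<Rightarrow> real) \<Rightarrow> 'i \<Rightarrow> ('z::finite \<Rightarrow> real) \<Rightarrow> 'th \<Rightarrow> ('z \<Rightarrow> real) set" where
  "LY u i \<alpha> th = {y \<in> lotteries. EU u i th \<alpha> \<ge> EU u i th y}"

definition LZset :: "('i \<Rightarrow> 'th \<Rightarrow> 'z \<Rightarrow> real) \<Rightarrow> 'i \<Rightarrow> 'z set \<Rightarrow> 'th \<Rightarrow> 'z set" where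
  "LZset u i E th = {z'. \<forall>z\<in>E. u i th z \<ge> u i th z'}"

definition argmax_on :: "('z \<Rightarrow> real) \<Rightarrow> 'z set \<Rightarrow> 'z set" where
  "argmax_on f S = {z \<in> S. \<forall>z'\<in>S. f z' \<le> f z}"

definition argmin_on :: "('z \<Rightarrow> real) \<Rightarrow> 'z set \<Rightarrow> 'z set" where
  "argmin_on f S = {z \<in> S. \<forall>z'\<in>S. f z \<le> f z'}"

definition is_imax_set :: "('i \<Rightarrow> 'th \<Rightarrow> 'z \<Rightarrow> real) \<Rightarrow> 'i \<Rightarrow> 'z set \<Rightarrow> bool" where
  "is_imax_set u i E \<longleftrightarrow> E \<noteq> {} \<and> (\<exists>th. E \<subseteq> argmax_on (u i th) E \<and>
       (\<forall>j. j \<noteq> i \<longrightarrow> E \<subseteq> argmax_on (u j th) UNIV))"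

definition Zstar :: "('i \<Rightarrow> 'th \<Rightarrow> 'z \<Rightarrow> real) \<Rightarrow> ('th \<Rightarrow> 'z set) \<Rightarrow> 'z set" where
  "Zstar u F = (if \<exists>i. is_imax_set u i UNIV then (\<Union>th. F th) else UNIV)"

definition is_iZth_max :: "('i \<Rightarrow> 'th \<Rightarrow> 'z \<Rightarrow> real) \<Rightarrow> ('th \<Rightarrow> 'z set) \<Rightarrow> 'i \<Rightarrow> 'z set \<Rightarrow> 'th \<Rightarrow> bool" where
  "is_iZth_max u F i E th \<longleftrightarrow> E \<noteq> {} \<and> E \<subseteq> Zstar u F \<and> E \<subseteq> argmax_on (u i th) E \<and>
       (\<forall>j. j \<noteq> i \<longrightarrow> E \<subseteq> argmax_on (u j th) (Zstar u F))"

definition Lambda :: "('i \<Rightarrow> 'th \<Rightarrow> 'z \<Rightarrow> real) \<Rightarrow> ('th \<Rightarrow> 'z set) \<Rightarrow> 'i \<Rightarrow> 'z set \<Rightarrow> 'th set" where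
  "Lambda u F i E = {th. is_iZth_max u F i E th}"

definition is_iZ_max :: "('i \<Rightarrow> 'th \<Rightarrow> 'z \<Rightarrow> real) \<Rightarrow> ('th \<Rightarrow> 'z set) \<Rightarrow> 'i \<Rightarrow> 'z set \<Rightarrow> bool" where
  "is_iZ_max u F i E \<longleftrightarrow> Lambda u F i E \<noteq> {}"

definition Theta_i :: "('i \<Rightarrow> 'th \<Rightarrow> 'z \<Rightarrow> real) \<Rightarrow> ('th \<Rightarrow> 'z set) \<Rightarrow> 'i \<Rightarrow> 'th \<Rightarrow> 'th set" where
  "Theta_i u F i th = {th'. is_iZth_max u F i (F th) th' \<and> F th \<subseteq> F th'}"

definition Xi :: "('i \<Rightarrow> 'th \<Rightarrow> 'z \<Rightarrow> real) \<Rightarrow> ('th \<Rightarrow> 'z set) \<Rightarrow> 'i \<Rightarrow> 'th \<Rightarrow> 'th set set" where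
  "Xi u F i th = {K. K \<subseteq> Theta_i u F i th \<and> K \<noteq> {} \<and>
      Theta_i u F i th \<inter> Lambda u F i (Zstar u F \<inter> LZset u i (F th) th \<inter> (\<Inter>th'\<in>K. F th')) = K}"

definition Lhat :: "('i \<Rightarrow> 'th \<Rightarrow> 'z::finite \<Rightarrow> real) \<Rightarrow> ('th \<Rightarrow> 'z set) \<Rightarrow> 'i \<Rightarrow> 'th \<Rightarrow> ('z \<Rightarrow> real) set" where
  "Lhat u F i th =
     (if F th \<subseteq> argmin_on (u i th) (Zstar u F) \<and> Xi u F i th \<noteq> {} \<and>
         is_iZ_max u F i (Zstar u F \<inter> LZset u i (F th) th)
      then lotteries_on (Zstar u F \<inter> LZset u i (F th) th \<inter> (\<Union>K\<in>Xi u F i th. \<Inter>th'\<in>K. F th'))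
      else lotteries_on (Zstar u F) \<inter> LY u i (unif (F th)) th)"

definition Lhat_uniform_monotonic :: "('i \<Rightarrow> 'th \<Rightarrow> 'z::finite \<Rightarrow> real) \<Rightarrow> ('th \<Rightarrow> 'z set) \<Rightarrow> bool" where
  "Lhat_uniform_monotonic u F \<longleftrightarrow> (\<forall>th th'.
      (\<forall>i. Lhat u F i th \<subseteq> LY u i (unif (F th)) th') \<longrightarrow> F th \<subseteq> F th')"

end

theory Submission
  imports Defs
begin

text \<open>Suppose \<open>\<Xi>\<^sub>i(\<theta>) = \<emptyset>\<close>, so that \<open>\<L>\<^sub>i(\<theta>)\<close> is the plain lower contour set of \<open>UNIF[F(\<theta>)]\<close>
  in \<open>\<Delta>(Z\<^sup>*)\<close>. Since \<open>F(\<theta>)\<close> minimises \<open>u\<^sub>i\<^sup>\<theta>\<close> on \<open>Z\<^sup>*\<close>, this set consists of the lotteries on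
  \<open>S = Z\<^sup>* \<inter> L\<^sub>i\<^sup>Z(F(\<theta>),\<theta>)\<close>. At every \<open>\<theta>' \<in> \<Lambda>\<^sup>i(S)\<close> agent \<open>i\<close> is indifferent on \<open>S\<close> and every
  other agent ranks \<open>S\<close> on top of \<open>Z\<^sup>*\<close>, so the hypothesis of uniform monotonicity holds and
  \<open>\<Lambda>\<^sup>i(S) \<subseteq> \<Theta>\<^sub>i\<^sup>\<theta>\<close>. The map \<open>K \<mapsto> \<Theta>\<^sub>i\<^sup>\<theta> \<inter> \<Lambda>\<^sup>i(S \<inter> \<Inter>\<^sub>\<theta>'\<^sub>\<in>\<^sub>K F(\<theta>'))\<close> is monotone on subsets
  of \<open>\<Theta>\<^sub>i\<^sup>\<theta>\<close>, and a Knaster--Tarski fixed point of it contains its value \<open>\<Lambda>\<^sup>i(S) \<noteq> \<emptyset>\<close> at \<open>\<emptyset>\<close>;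
  hence it lies in \<open>\<Xi>\<^sub>i(\<theta>)\<close>, a contradiction.\<close>

lemma fixpoint_of_mono_on_Pow:
  fixes f :: "'a set \<Rightarrow> 'a set"
  assumes mono: "\<And>K1 K2. K1 \<subseteq> K2 \<Longrightarrow> K2 \<subseteq> A \<Longrightarrow> f K1 \<subseteq> f K2"
    and range: "\<And>K. f K \<subseteq> A"
  obtains K where "K \<subseteq> A" "f K = K" "f {} \<subseteq> K"
proof -
  define g where "g K = f (K \<inter> A)" for K
  have "mono g"
    unfolding g_def by (rule monoI) (meson Int_mono Int_lower2 mono order_refl)
  then have fix_g: "g (gfp g) = gfp g"
    by (rule gfp_unfold[symmetric])
  have sub: "gfp g \<subseteq> A"
    using fix_g range unfolding g_def by metis
  then have "f (gfp g) = gfp g"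
    using fix_g unfolding g_def by (simp add: Int_absorb2)
  moreover have "f {} \<subseteq> gfp g"
    using mono[of "{}" "gfp g"] sub \<open>f (gfp g) = gfp g\<close> by simp
  ultimately show ?thesis
    using that sub by blast
qed

lemma lotteries_on_mono: "A \<subseteq> B \<Longrightarrow> lotteries_on A \<subseteq> lotteries_on B"
  unfolding lotteries_on_def by auto

lemma unif_in_lotteries_on:
  fixes E :: "'z::finite set"
  assumes "E \<noteq> {}"
  shows "unif E \<in> lotteries_on E"
proof -
  have "(\<Sum>z\<in>UNIV. unif E z) = (\<Sum>z\<in>E. 1 / real (card E))"
    unfolding unif_def using sum.inter_restrict[of UNIV "\<lambda>_. 1 / real (card E)" E] by simp
  also have "\<dots> = 1"
    using assms by simp
  finally show ?thesis
    unfolding lotteries_on_def unif_def by auto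
qed

lemma lottery_expectation_le:
  fixes y :: "'z::finite \<Rightarrow> real"
  assumes "y \<in> lotteries_on A" "\<And>z. z \<in> A \<Longrightarrow> f z \<le> c"
  shows "(\<Sum>z\<in>UNIV. y z * f z) \<le> c"
proof -
  have "(\<Sum>z\<in>UNIV. y z * f z) \<le> (\<Sum>z\<in>UNIV. y z * c)"
  proof (rule sum_mono)
    fix z
    show "y z * f z \<le> y z * c"
      using assms unfolding lotteries_on_def by (cases "z \<in> A") (auto intro: mult_left_mono)
  qed
  also have "\<dots> = c"
    using assms(1) unfolding lotteries_on_def by (simp add: sum_distrib_right[symmetric])
  finally show ?thesis .
qed

lemma lottery_expectation_eq:
  fixes y :: "'z::finite \<Rightarrow> real"
  assumes "y \<in> lotteries_on A" "\<And>z. z \<in> A \<Longrightarrow> f z = c"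
  shows "(\<Sum>z\<in>UNIV. y z * f z) = c"
proof -
  have "(\<Sum>z\<in>UNIV. y z * f z) = (\<Sum>z\<in>UNIV. y z * c)"
    using assms unfolding lotteries_on_def by (intro sum.cong) auto
  also have "\<dots> = c"
    using assms(1) unfolding lotteries_on_def by (simp add: sum_distrib_right[symmetric])
  finally show ?thesis .
qed

lemma lottery_in_lotteries_on_sublevel:
  fixes y :: "'z::finite \<Rightarrow> real"
  assumes y: "y \<in> lotteries_on A" and lower: "\<And>z. z \<in> A \<Longrightarrow> m \<le> f z"
    and expectation: "(\<Sum>z\<in>UNIV. y z * f z) \<le> m"
  shows "y \<in> lotteries_on {z\<in>A. f z \<le> m}"
proof -
  have nonneg: "0 \<le> y z * (f z - m)" for z
    using y lower unfolding lotteries_on_def by (cases "z \<in> A") auto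
  have "(\<Sum>z\<in>UNIV. y z * (f z - m)) = (\<Sum>z\<in>UNIV. y z * f z) - m"
    using y unfolding lotteries_on_def
    by (simp add: right_diff_distrib sum_subtractf sum_distrib_right[symmetric])
  then have "(\<Sum>z\<in>UNIV. y z * (f z - m)) = 0"
    using expectation sum_nonneg[of UNIV "\<lambda>z. y z * (f z - m)"] nonneg by simp
  then have "y z * (f z - m) = 0" for z
    using sum_nonneg_eq_0_iff[of UNIV "\<lambda>z. y z * (f z - m)"] nonneg by simp
  then show ?thesis
    using y unfolding lotteries_on_def by fastforce
qed

lemma lotteries_on_subset_LY_unif:
  assumes E_max: "E \<subseteq> argmax_on (u j t) A" and "E \<noteq> {}"
  shows "lotteries_on A \<subseteq> LY u j (unif E) t"
proof
  fix y assume y: "y \<in> lotteries_on A"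
  obtain z0 where z0: "z0 \<in> E"
    using \<open>E \<noteq> {}\<close> by blast
  have level: "u j t z = u j t z0" if "z \<in> E" for z
    using E_max that z0 unfolding argmax_on_def by (blast intro: order_antisym)
  have "EU u j t (unif E) = u j t z0"
    unfolding EU_def by (rule lottery_expectation_eq[OF unif_in_lotteries_on[OF \<open>E \<noteq> {}\<close>] level])
  moreover have "EU u j t y \<le> u j t z0"
    unfolding EU_def using E_max z0 unfolding argmax_on_def
    by (intro lottery_expectation_le[OF y]) blast
  moreover have "y \<in> lotteries"
    using y lotteries_on_mono by blast
  ultimately show "y \<in> LY u j (unif E) t"
    unfolding LY_def by simp
qed

lemma lotteries_on_LY_unif_argmin:
  assumes E_min: "E \<subseteq> argmin_on (u i th) A" and "E \<noteq> {}"
  shows "lotteries_on A \<inter> LY u i (unif E) th \<subseteq> lotteries_on (A \<inter> LZset u i E th)"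
proof
  fix y assume y: "y \<in> lotteries_on A \<inter> LY u i (unif E) th"
  obtain z0 where z0: "z0 \<in> E"
    using \<open>E \<noteq> {}\<close> by blast
  have level: "u i th z = u i th z0" if "z \<in> E" for z
    using E_min that z0 unfolding argmin_on_def by (simp add: subset_iff order_antisym)
  have lower: "u i th z0 \<le> u i th z" if "z \<in> A" for z
    using E_min z0 that unfolding argmin_on_def by (simp add: subset_iff)
  have "EU u i th (unif E) = u i th z0"
    unfolding EU_def by (rule lottery_expectation_eq[OF unif_in_lotteries_on[OF \<open>E \<noteq> {}\<close>] level])
  then have "(\<Sum>z\<in>UNIV. y z * u i th z) \<le> u i th z0"
    using y unfolding LY_def EU_def by simp
  then have "y \<in> lotteries_on {z\<in>A. u i th z \<le> u i th z0}"
    using y lower by (intro lottery_in_lotteries_on_sublevel) auto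
  moreover have "{z\<in>A. u i th z \<le> u i th z0} = A \<inter> LZset u i E th"
    using z0 unfolding LZset_def by (auto dest: level)
  ultimately show "y \<in> lotteries_on (A \<inter> LZset u i E th)"
    by simp
qed

lemma Lhat_subset_lotteries_on_Zstar: "Lhat u F i th \<subseteq> lotteries_on (Zstar u F)"
proof -
  have "lotteries_on (Zstar u F \<inter> LZset u i (F th) th \<inter> (\<Union>K\<in>Xi u F i th. \<Inter>t\<in>K. F t))
      \<subseteq> lotteries_on (Zstar u F)"
    by (rule lotteries_on_mono) blast
  then show ?thesis
    unfolding Lhat_def by auto
qed

lemma is_iZth_max_subset:
  assumes "is_iZth_max u F i S t" "T \<subseteq> S" "T \<noteq> {}"
  shows "is_iZth_max u F i T t"
  using assms unfolding is_iZth_max_def argmax_on_def by blast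

lemma Lambda_antimono:
  assumes "T \<subseteq> S" "T \<noteq> {}"
  shows "Lambda u F i S \<subseteq> Lambda u F i T"
  unfolding Lambda_def by (auto intro: is_iZth_max_subset[OF _ assms])

lemma subset_Zstar_LZset_of_argmin:
  assumes "F th \<subseteq> argmin_on (u i th) (Zstar u F)"
  shows "F th \<subseteq> Zstar u F \<inter> LZset u i (F th) th"
  using assms unfolding argmin_on_def LZset_def by (auto intro: order_antisym)

lemma Lambda_subset_Theta_i:
  fixes u :: "'i \<Rightarrow> 'th \<Rightarrow> 'z::finite \<Rightarrow> real"
  assumes monotonic: "Lhat_uniform_monotonic u F"
    and F_ne: "F th \<noteq> {}"
    and F_min: "F th \<subseteq> argmin_on (u i th) (Zstar u F)"
    and Xi_empty: "Xi u F i th = {}"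
  shows "Lambda u F i (Zstar u F \<inter> LZset u i (F th) th) \<subseteq> Theta_i u F i th"
    (is "Lambda u F i ?S \<subseteq> _")
proof
  have F_S: "F th \<subseteq> ?S"
    using F_min by (rule subset_Zstar_LZset_of_argmin)
  fix t assume "t \<in> Lambda u F i ?S"
  then have S_max: "is_iZth_max u F i ?S t"
    unfolding Lambda_def by simp
  have "Lhat u F j th \<subseteq> LY u j (unif (F th)) t" for j
  proof (cases "j = i")
    case True
    have "F th \<subseteq> argmax_on (u i t) ?S"
      using S_max F_S unfolding is_iZth_max_def by blast
    have "Lhat u F i th = lotteries_on (Zstar u F) \<inter> LY u i (unif (F th)) th"
      using Xi_empty unfolding Lhat_def by simp
    also have "\<dots> \<subseteq> lotteries_on ?S"
      using F_min F_ne by (rule lotteries_on_LY_unif_argmin)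
    also have "\<dots> \<subseteq> LY u i (unif (F th)) t"
      using \<open>F th \<subseteq> argmax_on (u i t) ?S\<close> F_ne by (rule lotteries_on_subset_LY_unif)
    finally show ?thesis
      using True by simp
  next
    case False
    have "F th \<subseteq> argmax_on (u j t) (Zstar u F)"
      using S_max F_S False unfolding is_iZth_max_def by blast
    have "Lhat u F j th \<subseteq> lotteries_on (Zstar u F)"
      by (rule Lhat_subset_lotteries_on_Zstar)
    also have "\<dots> \<subseteq> LY u j (unif (F th)) t"
      using \<open>F th \<subseteq> argmax_on (u j t) (Zstar u F)\<close> F_ne by (rule lotteries_on_subset_LY_unif)
    finally show ?thesis .
  qed
  then have "F th \<subseteq> F t"
    using monotonic unfolding Lhat_uniform_monotonic_def by blast
  moreover have "is_iZth_max u F i (F th) t"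
    using S_max F_S F_ne by (rule is_iZth_max_subset)
  ultimately show "t \<in> Theta_i u F i th"
    unfolding Theta_i_def by simp
qed

lemma Xi_nonempty_if_Lambda_subset_Theta_i:
  assumes F_ne: "F th \<noteq> {}"
    and F_S: "F th \<subseteq> Zstar u F \<inter> LZset u i (F th) th"
    and S_max: "is_iZ_max u F i (Zstar u F \<inter> LZset u i (F th) th)"
    and S_Theta: "Lambda u F i (Zstar u F \<inter> LZset u i (F th) th) \<subseteq> Theta_i u F i th"
  shows "Xi u F i th \<noteq> {}"
proof -
  define S where "S = Zstar u F \<inter> LZset u i (F th) th"
  define f where "f K = Theta_i u F i th \<inter> Lambda u F i (S \<inter> (\<Inter>t\<in>K. F t))" for K
  have "f K1 \<subseteq> f K2" if "K1 \<subseteq> K2" "K2 \<subseteq> Theta_i u F i th" for K1 K2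
  proof -
    have "F th \<subseteq> S \<inter> (\<Inter>t\<in>K2. F t)"
      using that(2) F_S unfolding S_def Theta_i_def by auto
    then have "S \<inter> (\<Inter>t\<in>K2. F t) \<noteq> {}"
      using F_ne by blast
    with that(1) have "Lambda u F i (S \<inter> (\<Inter>t\<in>K1. F t)) \<subseteq> Lambda u F i (S \<inter> (\<Inter>t\<in>K2. F t))"
      by (intro Lambda_antimono) auto
    then show ?thesis
      unfolding f_def by blast
  qed
  moreover have "f K \<subseteq> Theta_i u F i th" for K
    unfolding f_def by blast
  ultimately obtain K where K: "K \<subseteq> Theta_i u F i th" "f K = K" "f {} \<subseteq> K"
    by (rule fixpoint_of_mono_on_Pow)
  have "f {} = Lambda u F i S"
    using S_Theta unfolding f_def S_def by auto
  then have "K \<noteq> {}"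
    using K(3) S_max unfolding is_iZ_max_def S_def by blast
  with K(1,2) have "K \<in> Xi u F i th"
    unfolding Xi_def f_def S_def by simp
  then show ?thesis
    by blast
qed

theorem lemma10:
  fixes u :: "'i::finite \<Rightarrow> 'th::countable \<Rightarrow> 'z::finite \<Rightarrow> real"
    and F :: "'th \<Rightarrow> 'z set" and i :: 'i and th :: 'th
  assumes "card (UNIV :: 'i set) \<ge> 3"
    and "\<And>t. F t \<noteq> {}"
    and "Lhat_uniform_monotonic u F"
    and "F th \<subseteq> argmin_on (u i th) (Zstar u F)"
    and "is_iZ_max u F i (Zstar u F \<inter> LZset u i (F th) th)"
  shows "Xi u F i th \<noteq> {}"
proof
  assume Xi_empty: "Xi u F i th = {}"
  have "Lambda u F i (Zstar u F \<inter> LZset u i (F th) th) \<subseteq> Theta_i u F i th"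
    by (rule Lambda_subset_Theta_i[OF assms(3,2,4) Xi_empty])
  then have "Xi u F i th \<noteq> {}"
    using assms(2,5) subset_Zstar_LZset_of_argmin[OF assms(4)]
    by (intro Xi_nonempty_if_Lambda_subset_Theta_i)
  then show False
    using Xi_empty by contradiction
qed

end
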